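(* For each $q\in\mathbb{C}\setminus\{0\}$ and $n\in\mathbb{N}$, $\mathcal{O}_q(\mathbb{B}_\infty^n)=\mathcal{O}_q(\mathbb{D}_\infty^n)$ as subspaces of the space of formal series $\sum_{k\in\mathbb{Z}_+^n}c_kx^k$ and as Fréchet algebras.
   Context: $\mathcal{O}_q^{\mathrm{reg}}(\mathbb{C}^n)$: algebra generated by $x_1,\dots,x_n$ with $x_ix_j=qx_jx_i$ ($i<j$); basis $x^k=x_1^{k_1}\cdots x_n^{k_n}$, $k\in\mathbb{Z}_+^n$. Put $w_q(k)=1$ if $|q|\ge1$ and $w_q(k)=|q|^{\sum_{i<j}k_ik_j}$ if $|q|<1$; $u_q(k)=|q|^{\sum_{i<j}k_ik_j}$; $[m]_q=1+\dots+q^{m-1}$, $[m]_q!=[1]_q\cdots[m]_q$, $[0]_q!=1$, $[k]_q!=\prod_i[k_i]_q!$, $|k|=\sum k_i$. For $f=\sum_kc_kx^k$: $\|f\|_{\mathbb{D},\rho}=\sum_k|c_k|w_q(k)\rho^{|k|}$ and $\|f\|_{\mathbb{B},\rho}=\sum_k|c_k|\big([k]_{|q|^2}!/[|k|]_{|q|^2}!\big)^{1/2}u_q(k)\rho^{|k|}$. $\mathcal{O}_q(\mathbb{D}_\infty^n)$ (resp. $\mathcal{O}_q(\mathbb{B}_\infty^n)$) is the completion of $\mathcal{O}_q^{\mathrm{reg}}(\mathbb{C}^n)$ with respect to the norms $\|\cdot\|_{\mathbb{D},\rho}$ (resp. $\|\cdot\|_{\mathbb{B},\rho}$), $\rho\in(0,\infty)$,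 realized as formal series with all these norms finite. *)

theory Defs
  imports "HOL-Analysis.Analysis"
begin

text \<open>Multi-indices k in Z_+^n are represented as functions nat => nat vanishing
outside {0..<n}.  A formal series sum_k c_k x^k is represented by its coefficient
function c, which vanishes outside the multi-indices.\<close>

definition multi_idx :: "nat \<Rightarrow> (nat \<Rightarrow> nat) set" where
  "multi_idx n = {k. \<forall>i\<ge>n. k i = 0}"

definition formal_series :: "nat \<Rightarrow> ((nat \<Rightarrow> nat) \<Rightarrow> complex) set" where
  "formal_series n = {c. \<forall>k. k \<notin> multi_idx n \<longrightarrow> c k = 0}"

definition abs_idx :: "nat \<Rightarrow> (nat \<Rightarrow> nat) \<Rightarrow> nat" where
  "abs_idx n k = (\<Sum>i<n. k i)"

definition cross_exp :: "nat \<Rightarrow> (nat \<Rightarrow> nat) \<Rightarrow> nat" where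
  "cross_exp n k = (\<Sum>j<n. \<Sum>i<j. k i * k j)"

definition w_q :: "complex \<Rightarrow> nat \<Rightarrow> (nat \<Rightarrow> nat) \<Rightarrow> real" where
  "w_q q n k = (if norm q \<ge> 1 then 1 else norm q ^ cross_exp n k)"

definition u_q :: "complex \<Rightarrow> nat \<Rightarrow> (nat \<Rightarrow> nat) \<Rightarrow> real" where
  "u_q q n k = norm q ^ cross_exp n k"

definition qint :: "real \<Rightarrow> nat \<Rightarrow> real" where
  "qint r m = (\<Sum>i<m. r ^ i)"

definition qfact :: "real \<Rightarrow> nat \<Rightarrow> real" where
  "qfact r m = (\<Prod>j\<in>{1..m}. qint r j)"

definition multi_qfact :: "real \<Rightarrow> nat \<Rightarrow> (nat \<Rightarrow> nat) \<Rightarrow> real" where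
  "multi_qfact r n k = (\<Prod>i<n. qfact r (k i))"

definition weightD :: "complex \<Rightarrow> nat \<Rightarrow> real \<Rightarrow> (nat \<Rightarrow> nat) \<Rightarrow> real" where
  "weightD q n \<rho> k = w_q q n k * \<rho> ^ abs_idx n k"

definition weightB :: "complex \<Rightarrow> nat \<Rightarrow> real \<Rightarrow> (nat \<Rightarrow> nat) \<Rightarrow> real" where
  "weightB q n \<rho> k =
     sqrt (multi_qfact ((norm q)\<^sup>2) n k / qfact ((norm q)\<^sup>2) (abs_idx n k))
     * u_q q n k * \<rho> ^ abs_idx n k"

definition wnorm :: "(real \<Rightarrow> (nat \<Rightarrow> nat) \<Rightarrow> real) \<Rightarrow> nat \<Rightarrow> real
                     \<Rightarrow> ((nat \<Rightarrow> nat) \<Rightarrow> complex) \<Rightarrow> real" where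
  "wnorm W n \<rho> c = (\<Sum>\<^sub>\<infinity>k\<in>multi_idx n. norm (c k) * W \<rho> k)"

definition wspace :: "(real \<Rightarrow> (nat \<Rightarrow> nat) \<Rightarrow> real) \<Rightarrow> nat
                      \<Rightarrow> ((nat \<Rightarrow> nat) \<Rightarrow> complex) set" where
  "wspace W n = {c \<in> formal_series n.
      \<forall>\<rho>>0. (\<lambda>k. norm (c k) * W \<rho> k) summable_on multi_idx n}"

definition wtopology :: "(real \<Rightarrow> (nat \<Rightarrow> nat) \<Rightarrow> real) \<Rightarrow> nat
                         \<Rightarrow> ((nat \<Rightarrow> nat) \<Rightarrow> complex) topology" where
  "wtopology W n = topology_generated_by
     {{c \<in> wspace W n. wnorm W n \<rho> (c - c0) < \<epsilon>} | c0 \<rho> \<epsilon>.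
        c0 \<in> wspace W n \<and> \<rho> > 0 \<and> \<epsilon> > 0}"

definition OqD :: "complex \<Rightarrow> nat \<Rightarrow> ((nat \<Rightarrow> nat) \<Rightarrow> complex) set" where
  "OqD q n = wspace (weightD q n) n"

definition OqB :: "complex \<Rightarrow> nat \<Rightarrow> ((nat \<Rightarrow> nat) \<Rightarrow> complex) set" where
  "OqB q n = wspace (weightB q n) n"

definition topD :: "complex \<Rightarrow> nat \<Rightarrow> ((nat \<Rightarrow> nat) \<Rightarrow> complex) topology" where
  "topD q n = wtopology (weightD q n) n"

definition topB :: "complex \<Rightarrow> nat \<Rightarrow> ((nat \<Rightarrow> nat) \<Rightarrow> complex) topology" where
  "topB q n = wtopology (weightB q n) n"

end

theory Submission
  imports Defs
begin

text \<open>Write s for the one of |q|^2, |q|^-2 that is at most 1. Rescaling the q-factorials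
  from base |q|^2 to base |q|^-2 produces exactly the factor u_q squared, so in both cases the
  ball weight is the polydisc weight times the square root of [k]_s!/[|k|]_s!. By the q-Pascal
  recursion this ratio lies between 2^(-n|k|) and 1, hence each ball norm is bounded by the
  polydisc norm of the same radius, and each polydisc norm of radius rho by the ball norm of
  radius 2^n rho. Mutually dominating families of weighted l1-norms define the same space and
  the same locally convex topology.\<close>

definition weights_dominated ::
    "(real \<Rightarrow> (nat \<Rightarrow> nat) \<Rightarrow> real) \<Rightarrow> (real \<Rightarrow> (nat \<Rightarrow> nat) \<Rightarrow> real) \<Rightarrow> bool" where
  "weights_dominated W1 W2 \<longleftrightarrow> (\<forall>\<rho>>0. \<exists>\<rho>'>0. \<forall>k. W1 \<rho> k \<le> W2 \<rho>' k)"

definition wballs :: "(real \<Rightarrow> (nat \<Rightarrow> nat) \<Rightarrow> real) \<Rightarrow> nat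
                      \<Rightarrow> ((nat \<Rightarrow> nat) \<Rightarrow> complex) set set" where
  "wballs W n = {{c \<in> wspace W n. wnorm W n \<rho> (c - c0) < \<epsilon>} | c0 \<rho> \<epsilon>.
      c0 \<in> wspace W n \<and> \<rho> > 0 \<and> \<epsilon> > 0}"

lemma wtopology_eq_wballs: "wtopology W n = topology_generated_by (wballs W n)"
  by (simp add: wtopology_def wballs_def)

lemma wspace_antimono:
  assumes nonneg: "\<And>\<rho> k. \<rho> > 0 \<Longrightarrow> 0 \<le> W1 \<rho> k" and "weights_dominated W1 W2"
  shows "wspace W2 n \<subseteq> wspace W1 n"
proof
  fix c assume c: "c \<in> wspace W2 n"
  have "(\<lambda>k. norm (c k) * W1 \<rho> k) summable_on multi_idx n" if "\<rho> > 0" for \<rho>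
  proof -
    obtain \<rho>' where "\<rho>' > 0" and le: "\<forall>k. W1 \<rho> k \<le> W2 \<rho>' k"
      using \<open>weights_dominated W1 W2\<close> \<open>\<rho> > 0\<close> by (auto simp: weights_dominated_def)
    then have "(\<lambda>k. norm (c k) * W2 \<rho>' k) summable_on multi_idx n"
      using c by (simp add: wspace_def)
    then show ?thesis
      by (rule summable_on_comparison_test)
        (use le nonneg[OF \<open>\<rho> > 0\<close>] in \<open>auto intro: mult_left_mono\<close>)
  qed
  with c show "c \<in> wspace W1 n" by (simp add: wspace_def)
qed

lemma summable_on_wspace_diff:
  assumes "\<And>k. 0 \<le> W \<rho> k" "\<rho> > 0" "c \<in> wspace W n" "d \<in> wspace W n"
  shows "(\<lambda>k. norm ((c - d) k) * W \<rho> k) summable_on multi_idx n"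
proof -
  have "(\<lambda>k. norm (c k) * W \<rho> k + norm (d k) * W \<rho> k) summable_on multi_idx n"
    using assms by (intro summable_on_add) (auto simp: wspace_def)
  then show ?thesis
    by (rule summable_on_comparison_test)
      (use assms(1) in \<open>auto simp flip: distrib_right intro!: mult_right_mono norm_triangle_ineq4\<close>)
qed

lemma wnorm_triangle:
  assumes "\<And>k. 0 \<le> W \<rho> k" "\<rho> > 0"
    and "c \<in> wspace W n" "c1 \<in> wspace W n" "c0 \<in> wspace W n"
  shows "wnorm W n \<rho> (c - c0) \<le> wnorm W n \<rho> (c - c1) + wnorm W n \<rho> (c1 - c0)"
proof -
  note summable = summable_on_wspace_diff[of W \<rho>, OF assms(1,2)]
  have "wnorm W n \<rho> (c - c0)
      \<le> (\<Sum>\<^sub>\<infinity>k\<in>multi_idx n. norm ((c - c1) k) * W \<rho> k + norm ((c1 - c0) k) * W \<rho> k)"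
    unfolding wnorm_def
  proof (rule infsum_mono)
    fix k
    show "norm ((c - c0) k) * W \<rho> k \<le> norm ((c - c1) k) * W \<rho> k + norm ((c1 - c0) k) * W \<rho> k"
      using assms(1)[of k] norm_triangle_ineq[of "c k - c1 k" "c1 k - c0 k"]
      by (auto simp flip: distrib_right intro!: mult_right_mono)
  qed (use summable assms(3-5) in \<open>auto intro: summable_on_add\<close>)
  also have "\<dots> = wnorm W n \<rho> (c - c1) + wnorm W n \<rho> (c1 - c0)"
    unfolding wnorm_def using summable assms(3-5) by (intro infsum_add) auto
  finally show ?thesis .
qed

lemma wnorm_mono:
  assumes "\<And>k. 0 \<le> W1 \<rho> k" "\<And>k. 0 \<le> W2 \<rho>' k" "\<rho> > 0" "\<rho>' > 0"
    and "\<And>k. W1 \<rho> k \<le> W2 \<rho>' k"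
    and "c \<in> wspace W1 n" "d \<in> wspace W1 n" "c \<in> wspace W2 n" "d \<in> wspace W2 n"
  shows "wnorm W1 n \<rho> (c - d) \<le> wnorm W2 n \<rho>' (c - d)"
  unfolding wnorm_def
proof (rule infsum_mono)
  show "(\<lambda>k. norm ((c - d) k) * W1 \<rho> k) summable_on multi_idx n"
    using assms(1,3,6,7) by (rule summable_on_wspace_diff)
  show "(\<lambda>k. norm ((c - d) k) * W2 \<rho>' k) summable_on multi_idx n"
    using assms(2,4,8,9) by (rule summable_on_wspace_diff)
qed (simp add: assms(5) mult_left_mono)

lemma wball_open_in_dominating:
  assumes same: "wspace W1 n = wspace W2 n"
    and nonneg1: "\<And>\<rho> k. \<rho> > 0 \<Longrightarrow> 0 \<le> W1 \<rho> k"
    and nonneg2: "\<And>\<rho> k. \<rho> > 0 \<Longrightarrow> 0 \<le> W2 \<rho> k"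
    and "weights_dominated W1 W2"
    and "s \<in> wballs W1 n"
  shows "generate_topology_on (wballs W2 n) s"
proof -
  obtain c0 \<rho> \<epsilon> where s: "s = {c \<in> wspace W1 n. wnorm W1 n \<rho> (c - c0) < \<epsilon>}"
    and c0: "c0 \<in> wspace W1 n" and "\<rho> > 0"
    using \<open>s \<in> wballs W1 n\<close> by (auto simp: wballs_def)
  obtain \<rho>' where "\<rho>' > 0" and le: "\<And>k. W1 \<rho> k \<le> W2 \<rho>' k"
    using \<open>weights_dominated W1 W2\<close> \<open>\<rho> > 0\<close> by (auto simp: weights_dominated_def)
  have "\<exists>b \<in> wballs W2 n. c1 \<in> b \<and> b \<subseteq> s" if "c1 \<in> s" for c1
  proof -
    from that have c1: "c1 \<in> wspace W1 n" "wnorm W1 n \<rho> (c1 - c0) < \<epsilon>" by (auto simp: s)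
    define \<delta> where "\<delta> = \<epsilon> - wnorm W1 n \<rho> (c1 - c0)"
    define b where "b = {c \<in> wspace W2 n. wnorm W2 n \<rho>' (c - c1) < \<delta>}"
    have "b \<subseteq> s"
    proof
      fix c assume "c \<in> b"
      then have c: "c \<in> wspace W1 n" "wnorm W2 n \<rho>' (c - c1) < \<delta>" by (auto simp: b_def same)
      have "wnorm W1 n \<rho> (c - c0) \<le> wnorm W1 n \<rho> (c - c1) + wnorm W1 n \<rho> (c1 - c0)"
        using nonneg1 \<open>\<rho> > 0\<close> c c1 c0 by (intro wnorm_triangle) auto
      also have "wnorm W1 n \<rho> (c - c1) \<le> wnorm W2 n \<rho>' (c - c1)"
        using nonneg1 nonneg2 \<open>\<rho> > 0\<close> \<open>\<rho>' > 0\<close> le c c1 same by (intro wnorm_mono) auto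
      finally have "wnorm W1 n \<rho> (c - c0) < \<epsilon>"
        using c(2) unfolding \<delta>_def by linarith
      then show "c \<in> s" using c(1) by (simp add: s)
    qed
    moreover have "b \<in> wballs W2 n"
      using c1 same \<open>\<rho>' > 0\<close> unfolding b_def wballs_def \<delta>_def by force
    moreover have "c1 \<in> b"
      using c1 same by (simp add: b_def \<delta>_def wnorm_def)
    ultimately show ?thesis by blast
  qed
  then have "s = \<Union>{b \<in> wballs W2 n. b \<subseteq> s}" by blast
  also have "generate_topology_on (wballs W2 n) \<dots>"
    by (intro generate_topology_on.UN generate_topology_on.Basis) auto
  finally show ?thesis .
qed

lemma wspace_wtopology_eq:
  assumes nonneg1: "\<And>\<rho> k. \<rho> > 0 \<Longrightarrow> 0 \<le> W1 \<rho> k"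
    and nonneg2: "\<And>\<rho> k. \<rho> > 0 \<Longrightarrow> 0 \<le> W2 \<rho> k"
    and dom12: "weights_dominated W1 W2" and dom21: "weights_dominated W2 W1"
  shows "wspace W1 n = wspace W2 n \<and> wtopology W1 n = wtopology W2 n"
proof
  show same: "wspace W1 n = wspace W2 n"
    using wspace_antimono[OF nonneg1 dom12] wspace_antimono[OF nonneg2 dom21] by blast
  have "generate_topology_on (wballs W2 n) s" if "generate_topology_on (wballs W1 n) s" for s
    using istopology_generate_topology_on
      wball_open_in_dominating[OF same nonneg1 nonneg2 dom12] that
    by (rule generate_topology_on_coarsest)
  moreover have "generate_topology_on (wballs W1 n) s" if "generate_topology_on (wballs W2 n) s" for s
    using istopology_generate_topology_on
      wball_open_in_dominating[OF same[symmetric] nonneg2 nonneg1 dom21] that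
    by (rule generate_topology_on_coarsest)
  ultimately have "generate_topology_on (wballs W1 n) = generate_topology_on (wballs W2 n)"
    by blast
  then show "wtopology W1 n = wtopology W2 n"
    by (simp add: wtopology_eq_wballs)
qed

lemma qint_nonneg: "0 \<le> s \<Longrightarrow> 0 \<le> qint s j"
  by (simp add: qint_def sum_nonneg)

lemma qint_ge_1: "0 \<le> s \<Longrightarrow> 1 \<le> j \<Longrightarrow> 1 \<le> qint s j"
  unfolding qint_def using sum_mono2[of "{..<j}" "{0}" "power s"] by force

lemma qint_mono: "0 \<le> s \<Longrightarrow> i \<le> j \<Longrightarrow> qint s i \<le> qint s j"
  unfolding qint_def by (rule sum_mono2) auto

lemma qint_add: "qint s (a + b) = qint s a + s ^ a * qint s b"
  by (induction b) (simp_all add: qint_def power_add algebra_simps)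

lemma qfact_0 [simp]: "qfact s 0 = 1"
  by (simp add: qfact_def)

lemma qfact_Suc: "qfact s (Suc m) = qfact s m * qint s (Suc m)"
  by (simp add: qfact_def prod.cl_ivl_Suc)

lemma qfact_ge_1: "0 \<le> s \<Longrightarrow> 1 \<le> qfact s m"
  unfolding qfact_def by (rule prod_ge_1) (simp add: qint_ge_1)

lemma qfact_mult_le_qfact_add:
  assumes "0 \<le> s"
  shows "qfact s a * qfact s b \<le> qfact s (a + b)"
proof (induction b)
  case (Suc b)
  have "qfact s a * qfact s (Suc b) = (qfact s a * qfact s b) * qint s (Suc b)"
    by (simp add: qfact_Suc)
  also have "\<dots> \<le> qfact s (a + b) * qint s (Suc (a + b))"
    using Suc assms qint_mono[of s "Suc b" "Suc (a + b)"] qint_nonneg[of s]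
    by (intro mult_mono) (auto intro: order.trans[OF zero_le_one qfact_ge_1])
  finally show ?case by (simp add: qfact_Suc)
qed simp

text \<open>The q-Pascal recursion [a+b]! = [a+b-1]! ([a] + s^a [b]) bounds the q-binomial
  coefficient by 2^(a+b).\<close>
lemma qfact_add_le:
  assumes "0 \<le> s" "s \<le> 1"
  shows "qfact s (a + b) \<le> 2 ^ (a + b) * qfact s a * qfact s b"
proof (induction "a + b" arbitrary: a b)
  case (Suc m)
  have qfact_nonneg: "0 \<le> qfact s j" for j
    using qfact_ge_1[OF assms(1)] by (rule order.trans[OF zero_le_one])
  consider "a = 0" | "b = 0" | a' b' where "a = Suc a'" "b = Suc b'"
    by (meson not0_implies_Suc)
  then show ?case
  proof cases
    case 1
    then show ?thesis using qfact_nonneg[of b] by (simp add: mult_le_cancel_right1)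
  next
    case 2
    then show ?thesis using qfact_nonneg[of a] by (simp add: mult_le_cancel_right1)
  next
    case (3 a' b')
    have "qfact s m * qint s a \<le> (2 ^ m * qfact s a' * qfact s b) * qint s a"
      using Suc.hyps(1)[of a' b] Suc.hyps(2) 3 qint_nonneg[OF assms(1)]
      by (intro mult_right_mono) auto
    then have step_a: "qfact s m * qint s a \<le> 2 ^ m * qfact s a * qfact s b"
      by (simp add: 3 qfact_Suc algebra_simps)
    have "qfact s m * qint s b \<le> (2 ^ m * qfact s a * qfact s b') * qint s b"
      using Suc.hyps(1)[of a b'] Suc.hyps(2) 3 qint_nonneg[OF assms(1)]
      by (intro mult_right_mono) auto
    then have step_b: "qfact s m * qint s b \<le> 2 ^ m * qfact s a * qfact s b"
      by (simp add: 3 qfact_Suc algebra_simps)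
    have "s ^ a * (qfact s m * qint s b) \<le> qfact s m * qint s b"
      using assms qfact_nonneg[of m] qint_nonneg[OF assms(1), of b]
      by (intro mult_left_le_one_le) (auto intro: power_le_one)
    moreover have "qfact s (a + b) = qfact s m * qint s a + s ^ a * (qfact s m * qint s b)"
      by (simp only: Suc.hyps(2)[symmetric] qfact_Suc) (simp add: Suc.hyps(2) qint_add algebra_simps)
    ultimately show ?thesis
      using step_a step_b by (simp add: Suc.hyps(2)[symmetric])
  qed
qed simp

lemma abs_idx_Suc: "abs_idx (Suc n) k = abs_idx n k + k n"
  by (simp add: abs_idx_def)

lemma cross_exp_Suc: "cross_exp (Suc n) k = cross_exp n k + abs_idx n k * k n"
  by (simp add: cross_exp_def abs_idx_def sum_distrib_right)

lemma multi_qfact_Suc: "multi_qfact s (Suc n) k = multi_qfact s n k * qfact s (k n)"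
  by (simp add: multi_qfact_def)

lemma multi_qfact_ge_1: "0 \<le> s \<Longrightarrow> 1 \<le> multi_qfact s n k"
  unfolding multi_qfact_def by (rule prod_ge_1) (simp add: qfact_ge_1)

lemma multi_qfact_le_qfact: "0 \<le> s \<Longrightarrow> multi_qfact s n k \<le> qfact s (abs_idx n k)"
proof (induction n)
  case (Suc n)
  have "multi_qfact s (Suc n) k \<le> qfact s (abs_idx n k) * qfact s (k n)"
    unfolding multi_qfact_Suc using Suc qfact_ge_1[of s]
    by (intro mult_right_mono) (auto intro: order.trans[OF zero_le_one])
  also have "\<dots> \<le> qfact s (abs_idx (Suc n) k)"
    using qfact_mult_le_qfact_add[OF Suc.prems] by (simp add: abs_idx_Suc)
  finally show ?case .
qed (simp add: multi_qfact_def abs_idx_def)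

lemma qfact_le_multi_qfact:
  assumes "0 \<le> s" "s \<le> 1"
  shows "qfact s (abs_idx n k) \<le> 2 ^ (n * abs_idx n k) * multi_qfact s n k"
proof (induction n)
  case (Suc n)
  let ?A = "abs_idx n k"
  have "qfact s (abs_idx (Suc n) k) \<le> 2 ^ (?A + k n) * qfact s ?A * qfact s (k n)"
    using qfact_add_le[OF assms] by (simp add: abs_idx_Suc)
  also have "\<dots> \<le> 2 ^ (?A + k n) * (2 ^ (n * ?A) * multi_qfact s n k) * qfact s (k n)"
    using Suc qfact_ge_1[OF assms(1), of "k n"] by (intro mult_right_mono mult_left_mono) auto
  also have "\<dots> = 2 ^ (?A + k n + n * ?A) * multi_qfact s (Suc n) k"
    by (simp add: multi_qfact_Suc power_add algebra_simps)
  also have "\<dots> \<le> 2 ^ (Suc n * abs_idx (Suc n) k) * multi_qfact s (Suc n) k"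
    using multi_qfact_ge_1[OF assms(1), of "Suc n" k]
    by (intro mult_right_mono power_increasing) (auto simp: abs_idx_Suc algebra_simps)
  finally show ?case .
qed (simp add: multi_qfact_def abs_idx_def)

lemma choose_two_add: "(a + b) choose 2 = (a choose 2) + (b choose 2) + a * b"
  by (induction b) (simp_all add: numeral_2_eq_2 choose_one)

lemma choose_two_abs_idx: "abs_idx n k choose 2 = (\<Sum>i<n. k i choose 2) + cross_exp n k"
  by (induction n) (simp_all add: abs_idx_Suc cross_exp_Suc choose_two_add,
      simp_all add: abs_idx_def cross_exp_def)

lemma qint_inverse:
  assumes "r > 0"
  shows "qint r j = r ^ (j - 1) * qint (1 / r) j"
proof -
  have "qint r j = (\<Sum>i<j. r ^ (j - Suc i))"
    unfolding qint_def by (rule sum.nat_diff_reindex[symmetric])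
  also have "\<dots> = (\<Sum>i<j. r ^ (j - 1) * (1 / r) ^ i)"
  proof (rule sum.cong[OF refl])
    fix i assume "i \<in> {..<j}"
    then have "r ^ (j - 1) = r ^ (j - Suc i) * r ^ i"
      by (simp add: power_add[symmetric])
    then show "r ^ (j - Suc i) = r ^ (j - 1) * (1 / r) ^ i"
      using assms by (simp add: power_one_over)
  qed
  also have "\<dots> = r ^ (j - 1) * qint (1 / r) j"
    by (simp add: qint_def sum_distrib_left)
  finally show ?thesis .
qed

lemma qfact_inverse: "r > 0 \<Longrightarrow> qfact r m = r ^ (m choose 2) * qfact (1 / r) m"
proof (induction m)
  case (Suc m)
  have "qfact r (Suc m) = (r ^ (m choose 2) * qfact (1 / r) m) * (r ^ m * qint (1 / r) (Suc m))"
    using Suc qint_inverse[OF Suc.prems, of "Suc m"] by (simp only: qfact_Suc diff_Suc_1)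
  also have "\<dots> = r ^ (Suc m choose 2) * qfact (1 / r) (Suc m)"
    by (simp only: Suc_1[symmetric] binomial_Suc_Suc choose_one qfact_Suc power_add mult_ac)
  finally show ?case .
qed (simp add: numeral_2_eq_2)

lemma multi_qfact_inverse:
  assumes "r > 0"
  shows "multi_qfact r n k = r ^ (\<Sum>i<n. k i choose 2) * multi_qfact (1 / r) n k"
proof -
  have "multi_qfact r n k = (\<Prod>i<n. r ^ (k i choose 2) * qfact (1 / r) (k i))"
    unfolding multi_qfact_def using assms by (intro prod.cong refl qfact_inverse)
  then show ?thesis
    by (simp add: multi_qfact_def prod.distrib power_sum)
qed

definition qfact_ratio :: "real \<Rightarrow> nat \<Rightarrow> (nat \<Rightarrow> nat) \<Rightarrow> real" where
  "qfact_ratio s n k = multi_qfact s n k / qfact s (abs_idx n k)"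

lemma qfact_ratio_le_1: "0 \<le> s \<Longrightarrow> qfact_ratio s n k \<le> 1"
  using multi_qfact_le_qfact[of s n k] qfact_ge_1[of s "abs_idx n k"]
  by (simp add: qfact_ratio_def divide_le_eq_1)

lemma qfact_ratio_ge:
  assumes "0 \<le> s" "s \<le> 1"
  shows "(1 / 2) ^ (n * abs_idx n k) \<le> qfact_ratio s n k"
  using qfact_le_multi_qfact[OF assms, of n k] qfact_ge_1[OF assms(1), of "abs_idx n k"]
  by (simp add: qfact_ratio_def power_one_over field_simps)

lemma qfact_ratio_inverse:
  assumes "r > 0"
  shows "qfact_ratio r n k = qfact_ratio (1 / r) n k / r ^ cross_exp n k"
  using assms by (simp add: qfact_ratio_def multi_qfact_inverse[OF assms] qfact_inverse[OF assms]
      choose_two_abs_idx power_add)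

lemma weightB_eq_sqrt_qfact_ratio:
  assumes "q \<noteq> 0"
  shows "weightB q n \<rho> k
    = sqrt (qfact_ratio (if 1 \<le> norm q then 1 / (norm q)\<^sup>2 else (norm q)\<^sup>2) n k) * weightD q n \<rho> k"
proof (cases "1 \<le> norm q")
  case True
  have "((norm q)\<^sup>2) ^ cross_exp n k = (norm q ^ cross_exp n k)\<^sup>2"
    by (simp flip: power_mult add: mult.commute)
  then have "sqrt (qfact_ratio ((norm q)\<^sup>2) n k)
      = sqrt (qfact_ratio (1 / (norm q)\<^sup>2) n k) / norm q ^ cross_exp n k"
    using assms by (simp add: qfact_ratio_inverse[of "(norm q)\<^sup>2"] real_sqrt_divide)
  then show ?thesis
    using True assms
    by (simp add: weightB_def weightD_def w_q_def u_q_def qfact_ratio_def[symmetric])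
next
  case False
  then show ?thesis
    by (simp add: weightB_def weightD_def w_q_def u_q_def qfact_ratio_def)
qed

lemma weightD_nonneg: "\<rho> > 0 \<Longrightarrow> 0 \<le> weightD q n \<rho> k"
  by (simp add: weightD_def w_q_def)

lemma weightB_bounds:
  assumes "q \<noteq> 0" "\<rho> > 0"
  shows "0 \<le> weightB q n \<rho> k" and "weightB q n \<rho> k \<le> weightD q n \<rho> k"
    and "(1 / 2) ^ (n * abs_idx n k) * weightD q n \<rho> k \<le> weightB q n \<rho> k"
proof -
  define R where "R = qfact_ratio (if 1 \<le> norm q then 1 / (norm q)\<^sup>2 else (norm q)\<^sup>2) n k"
  have s: "0 \<le> (if 1 \<le> norm q then 1 / (norm q)\<^sup>2 else (norm q)\<^sup>2)"
          "(if 1 \<le> norm q then 1 / (norm q)\<^sup>2 else (norm q)\<^sup>2) \<le> (1::real)"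
    by (auto simp: abs_square_le_1 one_le_power divide_le_eq_1)
  have R: "(1 / 2) ^ (n * abs_idx n k) \<le> R" "R \<le> 1"
    unfolding R_def using qfact_ratio_ge[OF s] qfact_ratio_le_1[OF s(1)] by auto
  have W: "weightB q n \<rho> k = sqrt R * weightD q n \<rho> k"
    unfolding R_def by (rule weightB_eq_sqrt_qfact_ratio[OF assms(1)])
  have D: "0 \<le> weightD q n \<rho> k" using weightD_nonneg[OF assms(2)] .
  have "0 \<le> R" using R(1) by (auto intro: order.trans[rotated])
  then have "R\<^sup>2 \<le> R" "sqrt R \<le> 1"
    using R(2) by (auto simp: power2_eq_square mult_left_le_one_le)
  then have "R \<le> sqrt R" "sqrt R \<le> 1"
    by (auto intro: real_le_rsqrt)
  with R D \<open>0 \<le> R\<close> show "0 \<le> weightB q n \<rho> k" "weightB q n \<rho> k \<le> weightD q n \<rho> k"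
      "(1 / 2) ^ (n * abs_idx n k) * weightD q n \<rho> k \<le> weightB q n \<rho> k"
    unfolding W by (auto intro: mult_left_le_one_le mult_right_mono)
qed

lemma weightD_scale: "weightD q n (c * \<rho>) k = c ^ abs_idx n k * weightD q n \<rho> k"
  by (simp add: weightD_def power_mult_distrib)

lemma weightD_le_weightB:
  assumes "q \<noteq> 0" "\<rho> > 0"
  shows "weightD q n \<rho> k \<le> weightB q n (2 ^ n * \<rho>) k"
proof -
  have "weightD q n \<rho> k = (1 / 2) ^ (n * abs_idx n k) * weightD q n (2 ^ n * \<rho>) k"
    by (simp add: weightD_scale power_mult power_one_over)
  also have "\<dots> \<le> weightB q n (2 ^ n * \<rho>) k"
    using assms by (intro weightB_bounds) auto
  finally show ?thesis .
qed

theorem corollary4p3: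
  fixes q :: complex and n :: nat
  assumes "q \<noteq> 0"
  shows "OqB q n = OqD q n \<and> topB q n = topD q n"
proof -
  have "weights_dominated (weightB q n) (weightD q n)"
    using weightB_bounds(2)[OF assms] unfolding weights_dominated_def by blast
  moreover have "weights_dominated (weightD q n) (weightB q n)"
    unfolding weights_dominated_def
  proof (intro allI impI)
    fix \<rho> :: real assume "\<rho> > 0"
    then show "\<exists>\<rho>'>0. \<forall>k. weightD q n \<rho> k \<le> weightB q n \<rho>' k"
      using weightD_le_weightB[OF assms] by (intro exI[of _ "2 ^ n * \<rho>"]) auto
  qed
  ultimately show ?thesis
    unfolding OqB_def OqD_def topB_def topD_def
    using weightB_bounds(1)[OF assms] weightD_nonneg by (intro wspace_wtopology_eq)
qed

end
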